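(* Let $d\ge 2$, $n\ge 1$ and $0\le k<n$ be integers, and let $\mathbb{Z}_d$ be the ring of integers modulo $d$. Let $\Lambda=\begin{pmatrix}0&I_n\\-I_n&0\end{pmatrix}$ and $\mathrm{Sp}(2n,\mathbb{Z}_d)=\{M\in M_{2n}(\mathbb{Z}_d): M^T\Lambda M=\Lambda\}$. Let $T(n,k,d)$ be the set of all $M\in \mathrm{Sp}(2n,\mathbb{Z}_d)$ which, in block form with respect to the partition of rows and columns into consecutive blocks of sizes $(n-k,\,k,\,n-k,\,k)$, have the form $$M=\begin{pmatrix}(A^T)^{-1}&0&0&0\\ M_{21}&M_{22}&0&M_{24}\\ M_{31}&M_{32}&A&M_{34}\\ M_{41}&M_{42}&0&M_{44}\end{pmatrix}$$ for some invertible $A\in \mathrm{GL}(n-k,\mathbb{Z}_d)$ and arbitrary blocks $M_{ij}$ of the appropriate sizes (when $k=0$ this reads $M=\begin{pmatrix}(A^T)^{-1}&0\\ M_{31}&A\end{pmatrix}$). Then $T(n,k,d)$ is a subgroup of $\mathrm{Sp}(2n,\mathbb{Z}_d)$.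
   Context: All matrix arithmetic is over the ring $\mathbb{Z}_d$ (which need not be a field). $I_m$ denotes the $m\times m$ identity matrix and $\mathrm{GL}(m,\mathbb{Z}_d)$ the group of invertible $m\times m$ matrices over $\mathbb{Z}_d$. *)

theory Defs
  imports "Jordan_Normal_Form.Matrix" "Berlekamp_Zassenhaus.Finite_Field"
begin

text \<open>The ring Z_d is modelled as the type 'd mod_ring with d = CARD('d) > 1
  (class nontriv); matrices are Jordan_Normal_Form matrices over it.\<close>

definition Lambda :: "nat \<Rightarrow> 'd::nontriv mod_ring mat" where
  "Lambda n = four_block_mat (0\<^sub>m n n) (1\<^sub>m n) (- 1\<^sub>m n) (0\<^sub>m n n)"

definition Sp :: "nat \<Rightarrow> 'd::nontriv mod_ring mat set" where
  "Sp n = {M \<in> carrier_mat (2*n) (2*n). transpose_mat M * Lambda n * M = Lambda n}"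

definition Sp_group :: "nat \<Rightarrow> 'd::nontriv mod_ring mat monoid" where
  "Sp_group n = \<lparr>carrier = Sp n, mult = (*), one = 1\<^sub>m (2*n)\<rparr>"

text \<open>T(n,k,d): block rows/columns of sizes (n-k, k, n-k, k), i.e. index ranges
  [0,n-k), [n-k,n), [n,2n-k), [2n-k,2n).  First block row is ((A^T)^{-1},0,0,0)
  (with B = (A^T)^{-1}), third block column is (0,0,A,0)^T; everything else arbitrary.\<close>
definition T_set :: "nat \<Rightarrow> nat \<Rightarrow> 'd::nontriv mod_ring mat set" where
  "T_set n k = {M \<in> Sp n. \<exists>A B.
     A \<in> carrier_mat (n-k) (n-k) \<and> B \<in> carrier_mat (n-k) (n-k) \<and>
     B * transpose_mat A = 1\<^sub>m (n-k) \<and> transpose_mat A * B = 1\<^sub>m (n-k) \<and>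
     (\<forall>i<2*n. \<forall>j<2*n.
        (i < n-k \<longrightarrow> M $$ (i,j) = (if j < n-k then B $$ (i,j) else 0)) \<and>
        (n \<le> j \<and> j < 2*n-k \<longrightarrow>
           M $$ (i,j) = (if n \<le> i \<and> i < 2*n-k then A $$ (i-n, j-n) else 0)))}"

end

theory Submission
  imports Defs "Jordan_Normal_Form.Determinant"
begin

text \<open>T(n,k,d) consists of the symplectic matrices with two block patterns: the first
  p = n - k rows vanish outside the leading p x p block B, and the columns n, ..., n + p - 1
  vanish outside the diagonal block A. Each pattern is preserved by products, the blocks
  multiplying along. The inverse of a symplectic M is \<Lambda>^T M^T \<Lambda>; transposition turns
  the row pattern into a column pattern and conjugation by \<Lambda> swaps the two halves of the
  index range, so the inverse again has both patterns, with blocks A^T and B^T, and the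
  relation B = (A^T)^-1 is preserved.\<close>

lemma index_mult_mat_sum:
  assumes "M \<in> carrier_mat m m" "N \<in> carrier_mat m m" "i < m" "j < m"
  shows "(M * N) $$ (i,j) = (\<Sum>l<m. M $$ (i,l) * N $$ (l,j))"
  using assms by (auto simp: scalar_prod_def atLeast0LessThan intro!: sum.cong)

lemma mult_carrier_mat_square [simp]:
  "A \<in> carrier_mat m m \<Longrightarrow> B \<in> carrier_mat m m \<Longrightarrow> A * B \<in> carrier_mat m m"
  by (rule mult_carrier_mat)

lemma mat_left_inverse_imp_right_inverse:
  fixes M N :: "'a::comm_ring_1 mat"
  assumes M: "M \<in> carrier_mat m m" and N: "N \<in> carrier_mat m m" and NM: "N * M = 1\<^sub>m m"
  shows "M * N = 1\<^sub>m m"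
proof -
  have det: "det N * det M = 1" using det_mult[OF N M] NM by simp
  define R where "R = det N \<cdot>\<^sub>m adj_mat M"
  have R: "R \<in> carrier_mat m m" using adj_mat(1)[OF M] by (simp add: R_def)
  have MR: "M * R = 1\<^sub>m m" unfolding R_def
    using mult_smult_distrib[OF M adj_mat(1)[OF M]] adj_mat(2)[OF M] det
    by (auto intro!: eq_matI simp: mult.assoc[symmetric])
  have "N = (N * M) * R" using MR M N R by simp
  then show ?thesis using NM MR R by simp
qed

lemma right_inverse_mult_mat:
  fixes X1 X2 Y1 Y2 :: "'a::semiring_1 mat"
  assumes "X1 \<in> carrier_mat m m" "X2 \<in> carrier_mat m m" "Y1 \<in> carrier_mat m m" "Y2 \<in> carrier_mat m m"
    and "X1 * Y1 = 1\<^sub>m m" "X2 * Y2 = 1\<^sub>m m"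
  shows "(X1 * X2) * (Y2 * Y1) = 1\<^sub>m m"
proof -
  have "(X1 * X2) * (Y2 * Y1) = X1 * ((X2 * Y2) * Y1)"
    using assms(1-4) by (simp add: assoc_mult_mat[of _ m m _ m _ m])
  then show ?thesis using assms left_mult_one_mat[OF assms(3)] by simp
qed

definition cols_in_block :: "nat \<Rightarrow> nat \<Rightarrow> 'a::zero mat \<Rightarrow> 'a mat \<Rightarrow> bool" where
  "cols_in_block r p M A \<longleftrightarrow> (\<forall>i<dim_row M. \<forall>j\<in>{r..<r+p}.
     M $$ (i,j) = (if i \<in> {r..<r+p} then A $$ (i-r, j-r) else 0))"

definition rows_in_block :: "nat \<Rightarrow> nat \<Rightarrow> 'a::zero mat \<Rightarrow> 'a mat \<Rightarrow> bool" where
  "rows_in_block r p M B \<longleftrightarrow> (\<forall>i\<in>{r..<r+p}. \<forall>j<dim_col M.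
     M $$ (i,j) = (if j \<in> {r..<r+p} then B $$ (i-r, j-r) else 0))"

lemma rows_in_block_iff_cols_in_block_transpose:
  assumes "B \<in> carrier_mat p p" "r + p \<le> dim_row M"
  shows "rows_in_block r p M B \<longleftrightarrow> cols_in_block r p (transpose_mat M) (transpose_mat B)"
  unfolding rows_in_block_def cols_in_block_def
proof (intro iffI allI impI ballI)
  fix i j
  assume "\<forall>i\<in>{r..<r+p}. \<forall>j<dim_col M.
      M $$ (i,j) = (if j \<in> {r..<r+p} then B $$ (i-r, j-r) else 0)"
    and "i < dim_row (transpose_mat M)" "j \<in> {r..<r+p}"
  then show "transpose_mat M $$ (i,j) =
      (if i \<in> {r..<r+p} then transpose_mat B $$ (i-r, j-r) else 0)"
    using assms by auto
next
  fix i j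
  assume "\<forall>i<dim_row (transpose_mat M). \<forall>j\<in>{r..<r+p}.
      transpose_mat M $$ (i,j) = (if i \<in> {r..<r+p} then transpose_mat B $$ (i-r, j-r) else 0)"
    and "j < dim_col M" "i \<in> {r..<r+p}"
  then show "M $$ (i,j) = (if j \<in> {r..<r+p} then B $$ (i-r, j-r) else 0)"
    using assms by auto
qed

lemma cols_in_block_mult:
  fixes M N :: "'a::semiring_0 mat"
  assumes M: "M \<in> carrier_mat m m" and N: "N \<in> carrier_mat m m" and rp: "r + p \<le> m"
    and A: "A \<in> carrier_mat p p" and A': "A' \<in> carrier_mat p p"
    and MA: "cols_in_block r p M A" and NA': "cols_in_block r p N A'"
  shows "cols_in_block r p (M * N) (A * A')"
  unfolding cols_in_block_def
proof (intro allI impI ballI)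
  fix i j assume i: "i < dim_row (M * N)" and j: "j \<in> {r..<r+p}"
  have "(M * N) $$ (i,j) = (\<Sum>l<m. M $$ (i,l) * N $$ (l,j))"
    using M N i j rp by (intro index_mult_mat_sum) auto
  also have "\<dots> = (\<Sum>l\<in>{r..<r+p}. M $$ (i,l) * A' $$ (l-r, j-r))"
    using NA' N j rp unfolding cols_in_block_def
    by (intro sum.mono_neutral_cong_right) auto
  also have "\<dots> = (\<Sum>l<p. M $$ (i,l+r) * A' $$ (l, j-r))"
    using sum.shift_bounds_nat_ivl[of "\<lambda>l. M $$ (i,l) * A' $$ (l-r, j-r)" 0 r p]
    by (simp add: atLeast0LessThan add.commute)
  also have "\<dots> = (if i \<in> {r..<r+p} then (A * A') $$ (i-r, j-r) else 0)"
    using MA M A A' i j unfolding cols_in_block_def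
    by (auto simp: scalar_prod_def atLeast0LessThan intro!: sum.cong)
  finally show "(M * N) $$ (i,j) = (if i \<in> {r..<r+p} then (A * A') $$ (i-r, j-r) else 0)" .
qed

lemma rows_in_block_mult:
  fixes M N :: "'a::comm_semiring_0 mat"
  assumes M: "M \<in> carrier_mat m m" and N: "N \<in> carrier_mat m m" and rp: "r + p \<le> m"
    and B: "B \<in> carrier_mat p p" and B': "B' \<in> carrier_mat p p"
    and MB: "rows_in_block r p M B" and NB': "rows_in_block r p N B'"
  shows "rows_in_block r p (M * N) (B * B')"
proof -
  have "cols_in_block r p (transpose_mat N * transpose_mat M) (transpose_mat B' * transpose_mat B)"
    using M N B B' MB NB' rp
    by (intro cols_in_block_mult[of _ m]) (auto simp: rows_in_block_iff_cols_in_block_transpose)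
  then show ?thesis
    using M N B B' rp by (simp add: rows_in_block_iff_cols_in_block_transpose transpose_mult)
qed

lemma Lambda_carrier: "Lambda n \<in> carrier_mat (2*n) (2*n)"
  unfolding Lambda_def by (metis four_block_carrier_mat mult_2 one_carrier_mat zero_carrier_mat)

lemma Lambda_dim [simp]: "dim_row (Lambda n) = 2*n" "dim_col (Lambda n) = 2*n"
  using Lambda_carrier[of n] by auto

lemma Lambda_entry:
  "i < 2*n \<Longrightarrow> j < 2*n \<Longrightarrow> Lambda n $$ (i,j) =
     (if i < n \<and> j = i + n then 1 else if n \<le> i \<and> i = j + n then -1 else 0)"
  unfolding Lambda_def by auto

lemma transpose_Lambda_mult_entry:
  assumes X: "X \<in> carrier_mat (2*n) (2*n)" and ij: "i < 2*n" "j < 2*n"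
  shows "(transpose_mat (Lambda n) * X) $$ (i,j) = (if i < n then - X $$ (i+n, j) else X $$ (i-n, j))"
proof -
  have "(transpose_mat (Lambda n) * X) $$ (i,j) = (\<Sum>l<2*n. Lambda n $$ (l,i) * X $$ (l,j))"
    using Lambda_carrier[of n] X ij by (subst index_mult_mat_sum) (auto intro!: sum.cong)
  also have "\<dots> = (\<Sum>l<2*n. if l = (if i < n then i+n else i-n)
                     then (if i < n then - X $$ (i+n, j) else X $$ (i-n, j)) else 0)"
    using ij by (intro sum.cong) (auto simp: Lambda_entry)
  finally show ?thesis using ij by auto
qed

lemma mult_Lambda_entry:
  assumes X: "X \<in> carrier_mat (2*n) (2*n)" and ij: "i < 2*n" "j < 2*n"
  shows "(X * Lambda n) $$ (i,j) = (if j < n then - X $$ (i, j+n) else X $$ (i, j-n))"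
proof -
  have "(X * Lambda n) $$ (i,j) = (\<Sum>l<2*n. X $$ (i,l) * Lambda n $$ (l,j))"
    using Lambda_carrier[of n] X ij by (intro index_mult_mat_sum)
  also have "\<dots> = (\<Sum>l<2*n. if l = (if j < n then j+n else j-n)
                     then (if j < n then - X $$ (i, j+n) else X $$ (i, j-n)) else 0)"
    using ij by (intro sum.cong) (auto simp: Lambda_entry)
  finally show ?thesis using ij by auto
qed

lemma conj_Lambda_entry:
  assumes X: "X \<in> carrier_mat (2*n) (2*n)" and ij: "i < 2*n" "j < 2*n"
  shows "(transpose_mat (Lambda n) * X * Lambda n) $$ (i,j) =
    (if i < n \<longleftrightarrow> j < n then 1 else -1)
      * X $$ (if i < n then i+n else i-n, if j < n then j+n else j-n)"
proof -
  have "transpose_mat (Lambda n) * X \<in> carrier_mat (2*n) (2*n)"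
    using X by (intro mult_carrier_mat[of _ "2*n" "2*n"]) auto
  then show ?thesis
    using ij by (subst mult_Lambda_entry) (auto simp: transpose_Lambda_mult_entry[OF X])
qed

lemma transpose_Lambda_mult_Lambda: "transpose_mat (Lambda n) * Lambda n = 1\<^sub>m (2*n)"
proof -
  have "transpose_mat (Lambda n) * 1\<^sub>m (2*n) * Lambda n = 1\<^sub>m (2*n)"
    by (rule eq_matI) (subst conj_Lambda_entry, auto)
  then show ?thesis using Lambda_carrier[of n] by simp
qed

lemma rows_in_block_conj_Lambda:
  assumes "X \<in> carrier_mat (2*n) (2*n)" and "p \<le> n" and "rows_in_block n p X B"
  shows "rows_in_block 0 p (transpose_mat (Lambda n) * X * Lambda n) B"
  unfolding rows_in_block_def
proof (intro ballI allI impI)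
  fix i j assume "i \<in> {0..<0+p}" "j < dim_col (transpose_mat (Lambda n) * X * Lambda n)"
  then show "(transpose_mat (Lambda n) * X * Lambda n) $$ (i,j) =
      (if j \<in> {0..<0+p} then B $$ (i-0, j-0) else 0)"
    using assms unfolding rows_in_block_def by (subst conj_Lambda_entry) auto
qed

lemma cols_in_block_conj_Lambda:
  assumes "X \<in> carrier_mat (2*n) (2*n)" and "p \<le> n" and "cols_in_block 0 p X A"
  shows "cols_in_block n p (transpose_mat (Lambda n) * X * Lambda n) A"
  unfolding cols_in_block_def
proof (intro ballI allI impI)
  fix i j assume "i < dim_row (transpose_mat (Lambda n) * X * Lambda n)" "j \<in> {n..<n+p}"
  then show "(transpose_mat (Lambda n) * X * Lambda n) $$ (i,j) =
      (if i \<in> {n..<n+p} then A $$ (i-n, j-n) else 0)"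
    using assms unfolding cols_in_block_def by (subst conj_Lambda_entry) auto
qed

lemma Sp_carrier: "M \<in> Sp n \<Longrightarrow> M \<in> carrier_mat (2*n) (2*n)"
  by (simp add: Sp_def)

lemma one_mem_Sp: "1\<^sub>m (2*n) \<in> Sp n"
  using Lambda_carrier[of n] by (simp add: Sp_def)

lemma mult_mem_Sp:
  assumes X: "X \<in> Sp n" and Y: "Y \<in> Sp n"
  shows "X * Y \<in> Sp n"
proof -
  have Xc: "X \<in> carrier_mat (2*n) (2*n)" and Yc: "Y \<in> carrier_mat (2*n) (2*n)"
    using X Y by (simp_all add: Sp_carrier)
  have "transpose_mat (X * Y) * Lambda n * (X * Y)
      = transpose_mat Y * (transpose_mat X * Lambda n * X) * Y"
    using Xc Yc by (simp add: Lambda_carrier assoc_mult_mat[of _ "2*n" "2*n" _ "2*n" _ "2*n"]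
        transpose_mult[of _ "2*n" "2*n" _ "2*n"])
  also have "\<dots> = Lambda n"
    using X Y Yc Lambda_carrier[of n] by (simp add: Sp_def)
  finally show ?thesis using Xc Yc by (simp add: Sp_def)
qed

definition sp_inv :: "nat \<Rightarrow> 'd::nontriv mod_ring mat \<Rightarrow> 'd mod_ring mat" where
  "sp_inv n M = transpose_mat (Lambda n) * transpose_mat M * Lambda n"

lemma sp_inv_carrier: "M \<in> carrier_mat (2*n) (2*n) \<Longrightarrow> sp_inv n M \<in> carrier_mat (2*n) (2*n)"
  unfolding sp_inv_def by (intro mult_carrier_mat[of _ "2*n" "2*n"]) auto

lemma sp_inv_mult:
  assumes "M \<in> Sp n"
  shows "sp_inv n M * M = 1\<^sub>m (2*n)"
proof -
  have "sp_inv n M * M = transpose_mat (Lambda n) * (transpose_mat M * Lambda n * M)"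
    using Sp_carrier[OF assms]
    by (simp add: sp_inv_def Lambda_carrier assoc_mult_mat[of _ "2*n" "2*n" _ "2*n" _ "2*n"])
  also have "\<dots> = 1\<^sub>m (2*n)"
    using assms by (simp add: Sp_def transpose_Lambda_mult_Lambda)
  finally show ?thesis .
qed

lemma mult_sp_inv: "M \<in> Sp n \<Longrightarrow> M * sp_inv n M = 1\<^sub>m (2*n)"
  by (metis Sp_carrier mat_left_inverse_imp_right_inverse sp_inv_carrier sp_inv_mult)

lemma sp_inv_mem_Sp:
  assumes M: "M \<in> Sp n"
  shows "sp_inv n M \<in> Sp n"
proof -
  let ?N = "sp_inv n M"
  have Mc: "M \<in> carrier_mat (2*n) (2*n)" and Nc: "?N \<in> carrier_mat (2*n) (2*n)"
    using M by (simp_all add: Sp_carrier sp_inv_carrier)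
  have "transpose_mat ?N * Lambda n * ?N = transpose_mat ?N * (transpose_mat M * Lambda n * M) * ?N"
    using M by (simp add: Sp_def)
  also have "\<dots> = transpose_mat (M * ?N) * Lambda n * (M * ?N)"
    using Mc Nc by (simp add: Lambda_carrier assoc_mult_mat[of _ "2*n" "2*n" _ "2*n" _ "2*n"]
        transpose_mult[of _ "2*n" "2*n" _ "2*n"])
  also have "\<dots> = Lambda n"
    using M by (simp add: mult_sp_inv)
  finally show ?thesis using Nc by (simp add: Sp_def)
qed

lemma group_Sp_group: "group (Sp_group n :: 'd::nontriv mod_ring mat monoid)"
proof (rule groupI)
  fix x y z :: "'d mod_ring mat"
  assume "x \<in> carrier (Sp_group n)" "y \<in> carrier (Sp_group n)" "z \<in> carrier (Sp_group n)"
  then show "x \<otimes>\<^bsub>Sp_group n\<^esub> y \<otimes>\<^bsub>Sp_group n\<^esub> z = x \<otimes>\<^bsub>Sp_group n\<^esub> (y \<otimes>\<^bsub>Sp_group n\<^esub> z)"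
    by (auto simp: Sp_group_def dest!: Sp_carrier)
next
  fix x :: "'d mod_ring mat"
  assume "x \<in> carrier (Sp_group n)"
  then show "\<exists>y\<in>carrier (Sp_group n). y \<otimes>\<^bsub>Sp_group n\<^esub> x = \<one>\<^bsub>Sp_group n\<^esub>"
    by (auto simp: Sp_group_def intro!: bexI[of _ "sp_inv n x"] sp_inv_mult sp_inv_mem_Sp)
qed (auto simp: Sp_group_def one_mem_Sp mult_mem_Sp left_mult_one_mat[OF Sp_carrier])

lemma inv_Sp_group: "M \<in> Sp n \<Longrightarrow> inv\<^bsub>Sp_group n\<^esub> M = sp_inv n M"
  using group.inv_equality[OF group_Sp_group] sp_inv_mult sp_inv_mem_Sp
  by (fastforce simp: Sp_group_def)

definition T_blocks :: "nat \<Rightarrow> nat \<Rightarrow> 'a::comm_ring_1 mat \<Rightarrow> 'a mat \<Rightarrow> 'a mat \<Rightarrow> bool" where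
  "T_blocks n k M A B \<longleftrightarrow>
     A \<in> carrier_mat (n-k) (n-k) \<and> B \<in> carrier_mat (n-k) (n-k) \<and>
     B * transpose_mat A = 1\<^sub>m (n-k) \<and> transpose_mat A * B = 1\<^sub>m (n-k) \<and>
     rows_in_block 0 (n-k) M B \<and> cols_in_block n (n-k) M A"

lemma T_set_iff:
  assumes "k \<le> n"
  shows "M \<in> T_set n k \<longleftrightarrow> M \<in> Sp n \<and> (\<exists>A B. T_blocks n k M A B)"
proof -
  have "(\<forall>i<2*n. \<forall>j<2*n.
        (i < n-k \<longrightarrow> M $$ (i,j) = (if j < n-k then B $$ (i,j) else 0)) \<and>
        (n \<le> j \<and> j < 2*n-k \<longrightarrow>
           M $$ (i,j) = (if n \<le> i \<and> i < 2*n-k then A $$ (i-n, j-n) else 0)))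
      \<longleftrightarrow> rows_in_block 0 (n-k) M B \<and> cols_in_block n (n-k) M A"
    if "M \<in> carrier_mat (2*n) (2*n)" for A B
    using that assms unfolding rows_in_block_def cols_in_block_def by auto
  then show ?thesis
    unfolding T_set_def T_blocks_def using Sp_carrier by blast
qed

lemma T_blocks_one: "k \<le> n \<Longrightarrow> T_blocks n k (1\<^sub>m (2*n)) (1\<^sub>m (n-k)) (1\<^sub>m (n-k))"
  by (auto simp: T_blocks_def rows_in_block_def cols_in_block_def)

lemma T_blocks_mult:
  assumes k: "k \<le> n" and M: "M \<in> carrier_mat (2*n) (2*n)" and N: "N \<in> carrier_mat (2*n) (2*n)"
    and MAB: "T_blocks n k M A1 B1" and NAB: "T_blocks n k N A2 B2"
  shows "T_blocks n k (M * N) (A1 * A2) (B1 * B2)"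
proof -
  have A: "A1 \<in> carrier_mat (n-k) (n-k)" "A2 \<in> carrier_mat (n-k) (n-k)"
    and B: "B1 \<in> carrier_mat (n-k) (n-k)" "B2 \<in> carrier_mat (n-k) (n-k)"
    using MAB NAB by (simp_all add: T_blocks_def)
  have "rows_in_block 0 (n-k) (M * N) (B1 * B2)"
    using MAB NAB A B by (intro rows_in_block_mult[OF M N]) (simp_all add: T_blocks_def)
  moreover have "cols_in_block n (n-k) (M * N) (A1 * A2)"
    using MAB NAB A B k by (intro cols_in_block_mult[OF M N]) (simp_all add: T_blocks_def)
  moreover have "(B1 * B2) * transpose_mat (A1 * A2) = 1\<^sub>m (n-k)"
    and "transpose_mat (A1 * A2) * (B1 * B2) = 1\<^sub>m (n-k)"
    using MAB NAB A B by (simp_all add: T_blocks_def transpose_mult right_inverse_mult_mat)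
  ultimately show ?thesis
    using A B by (simp add: T_blocks_def)
qed

lemma T_blocks_sp_inv:
  assumes k: "k \<le> n" and M: "M \<in> carrier_mat (2*n) (2*n)" and MAB: "T_blocks n k M A B"
  shows "T_blocks n k (sp_inv n M) (transpose_mat B) (transpose_mat A)"
proof -
  have A: "A \<in> carrier_mat (n-k) (n-k)" and B: "B \<in> carrier_mat (n-k) (n-k)"
    using MAB by (simp_all add: T_blocks_def)
  have "rows_in_block n (n-k) (transpose_mat M) (transpose_mat A)"
    using MAB A M k by (simp add: T_blocks_def rows_in_block_iff_cols_in_block_transpose)
  then have "rows_in_block 0 (n-k) (sp_inv n M) (transpose_mat A)"
    unfolding sp_inv_def using M by (intro rows_in_block_conj_Lambda) auto
  moreover have "cols_in_block 0 (n-k) (transpose_mat M) (transpose_mat B)"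
    using MAB B M k by (simp add: T_blocks_def rows_in_block_iff_cols_in_block_transpose[symmetric])
  then have "cols_in_block n (n-k) (sp_inv n M) (transpose_mat B)"
    unfolding sp_inv_def using M by (intro cols_in_block_conj_Lambda) auto
  ultimately show ?thesis
    using MAB A B by (simp add: T_blocks_def)
qed

lemma T_set_subset_Sp: "T_set n k \<subseteq> Sp n"
  by (auto simp: T_set_def)

lemma one_mem_T_set: "k \<le> n \<Longrightarrow> 1\<^sub>m (2*n) \<in> T_set n k"
  using T_blocks_one one_mem_Sp by (auto simp: T_set_iff)

lemma mult_mem_T_set:
  assumes k: "k \<le> n" and "M \<in> T_set n k" and "N \<in> T_set n k"
  shows "M * N \<in> T_set n k"
  using assms T_blocks_mult[OF k] mult_mem_Sp Sp_carrier unfolding T_set_iff[OF k] by blast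

lemma sp_inv_mem_T_set:
  assumes k: "k \<le> n" and "M \<in> T_set n k"
  shows "sp_inv n M \<in> T_set n k"
  using assms T_blocks_sp_inv[OF k] sp_inv_mem_Sp Sp_carrier unfolding T_set_iff[OF k] by blast

theorem theorem1:
  fixes n k :: nat
  assumes "n \<ge> 1" and "k < n"
  shows "subgroup (T_set n k :: 'd::nontriv mod_ring mat set) (Sp_group n)"
proof -
  interpret Sp: group "Sp_group n :: 'd mod_ring mat monoid"
    by (rule group_Sp_group)
  have k: "k \<le> n" using assms(2) by simp
  show ?thesis
  proof (rule Sp.subgroupI)
    show "T_set n k \<subseteq> carrier (Sp_group n)"
      using T_set_subset_Sp by (simp add: Sp_group_def)
    show "T_set n k \<noteq> {}"
      using one_mem_T_set[OF k] by blast
  next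
    fix M :: "'d mod_ring mat" assume M: "M \<in> T_set n k"
    then have "inv\<^bsub>Sp_group n\<^esub> M = sp_inv n M"
      using T_set_subset_Sp inv_Sp_group by blast
    then show "inv\<^bsub>Sp_group n\<^esub> M \<in> T_set n k"
      using sp_inv_mem_T_set[OF k M] by simp
  next
    fix M N :: "'d mod_ring mat" assume "M \<in> T_set n k" "N \<in> T_set n k"
    then show "M \<otimes>\<^bsub>Sp_group n\<^esub> N \<in> T_set n k"
      using k by (simp add: Sp_group_def mult_mem_T_set)
  qed
qed

end
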